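(* Under the recursive network formation model with the utility function described in the context, the following hold. 1. If $c>b_1$ (for any $c_0$), no node ever enters. The resulting single-node network (which is both a star and a null graph) is efficient. 2. If the conditions $b_1-b_2+\gamma b_2\le c<b_1$ and $c_0<(1-\gamma)(b_2-b_3)$ hold, then the star network formed is efficient, for every number of nodes. 3. If the conditions $c<b_1-b_2$ and $c_0\le(1-\gamma)b_2$ hold, then the complete network formed is efficient, for every number of nodes.
   Context: Networks are finite simple undirected graphs whose vertices (nodes) are self-interested agents. Parameters: benefits $b_1>b_2>b_3>\dots>0$, where $b_i$ is the benefit a node obtains from a node at distance $i$; a link cost $c$ per immediate neighbor; an intermediation fraction $\gamma$ with $0\le\gamma<1$; and a network entry factor $c_0$. Notation: $N$ is the set of nodes currently in the network, $d_j$ the degree of $j$, and $l(j,w)$ the graph distance. A node $x$ is essential for a pair $y,z$ (with $x\notin\{y,z\}$) if $x$ lies on every path joining $y$ and $z$. Write $E(y,z)$ for the set of nodes essential for $y,z$ and $e(y,z)=|E(y,z)|$. Only pairs joined by a path contribute to the sums below. Utility of node $j$ in network $g$: $$u_j(g)=-c_0\,d_{T(j)}\mathbf 1_{\{j=\mathrm{NE}\}}+d_j(b_1-c)+\sum_{w\in N,\ l(j,w)>1}b_{l(j,w)}-\sum_{w\in N,\ E(j,w)\ne\emptyset}\gamma\, b_{l(j,w)}+\sum_{y,z\in N,\ j\in E(y,z)}\frac{\gamma}{e(y,z)}\,2\,b_{l(y,z)}.$$ Here $\mathbf 1_{\{j=\mathrm{NE}\}}=1$ exactly when $j$ is a newly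 entering node evaluating the creation of its first link. $T(j)$ is the existing node to which $j$ forms that first link, and $d_{T(j)}$ is that node's degree before the link. The network before entry gives the entering node utility $0$. Pairwise stability: $g$ is pairwise stable if (a) for every link $(i,j)\in g$, $u_i(g\setminus\{(i,j)\})\le u_i(g)$ and $u_j(g\setminus\{(i,j)\})\le u_j(g)$; and (b) for every non-link $(i,j)\notin g$, if $u_i(g\cup\{(i,j)\})>u_i(g)$ then $u_j(g\cup\{(i,j)\})<u_j(g)$. Recursive model of network formation: - The process starts with a single node. - When the current network of $n-1$ nodes is pairwise stable, a new node considers entering. Its options are to stay out or to propose a link to one existing node. The link forms iff the receiving node's utility does not decrease. No existing node can link to the newcomer before it has formed this first link. - After entry, nodes are repeatedly chosen at random to move. A chosen node plays a myopic best response among three options: create a link with a non-neighbor (the link forms only if the other node's utility does not decrease, which the proposer anticipates); delete a link with a neighbor (unilaterally); or keep the status quo. It alters a link only if this strictly increases its current utility. - This continues until the network is pairwise stable; then the next node considers entering, and so on. Efficiency: since intermediation rents are transfers and each node pays the entry fee at most once, the welfare of a network $g$ on node set $N$ is $$W(g)=\sum_{j\in N}\Big(d_j(b_1-c)+\sum_{w\in N,\ l(j,w)>1}b_{l(j,w)}\Big).$$ The network $g$ is efficient if $W(g)\ge W(g')$ for every network $g'$ on the same node set $N$. *)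

theory Defs
  imports Complex_Main
begin

(* Networks: nodes are the natural numbers 0,...,n-1 (node k is the k-th to enter);
   a network is a set of links, each link a 2-element set {x,y}. *)

definition graph_on :: "nat \<Rightarrow> nat set set \<Rightarrow> bool" where
  "graph_on n g \<longleftrightarrow> (\<forall>e\<in>g. \<exists>x y. x \<noteq> y \<and> x < n \<and> y < n \<and> e = {x, y})"

definition deg :: "nat set set \<Rightarrow> nat \<Rightarrow> nat" where
  "deg g j = card {k. k \<noteq> j \<and> {j, k} \<in> g}"

definition is_path :: "nat set set \<Rightarrow> nat \<Rightarrow> nat \<Rightarrow> nat list \<Rightarrow> bool" where
  "is_path g y z xs \<longleftrightarrow> xs \<noteq> [] \<and> hd xs = y \<and> last xs = z \<and> distinct xs \<and>
     (\<forall>i. Suc i < length xs \<longrightarrow> {xs ! i, xs ! Suc i} \<in> g)"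

definition conn :: "nat set set \<Rightarrow> nat \<Rightarrow> nat \<Rightarrow> bool" where
  "conn g y z \<longleftrightarrow> (\<exists>xs. is_path g y z xs)"

definition gdist :: "nat set set \<Rightarrow> nat \<Rightarrow> nat \<Rightarrow> nat" where
  "gdist g y z = (LEAST k. \<exists>xs. is_path g y z xs \<and> length xs = Suc k)"

definition essential :: "nat set set \<Rightarrow> nat \<Rightarrow> nat \<Rightarrow> nat \<Rightarrow> bool" where
  "essential g x y z \<longleftrightarrow> x \<noteq> y \<and> x \<noteq> z \<and> (\<forall>xs. is_path g y z xs \<longrightarrow> x \<in> set xs)"

definition ess_set :: "nat \<Rightarrow> nat set set \<Rightarrow> nat \<Rightarrow> nat \<Rightarrow> nat set" where
  "ess_set n g y z = {x. x < n \<and> essential g x y z}"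

(* utility of node j in network g on nodes {..<n}, without the entry term *)
definition util :: "(nat \<Rightarrow> real) \<Rightarrow> real \<Rightarrow> real \<Rightarrow> nat \<Rightarrow> nat set set \<Rightarrow> nat \<Rightarrow> real" where
  "util b c \<gamma> n g j =
     real (deg g j) * (b 1 - c)
   + (\<Sum>w\<in>{w. w < n \<and> conn g j w \<and> gdist g j w > 1}. b (gdist g j w))
   - (\<Sum>w\<in>{w. w < n \<and> conn g j w \<and> ess_set n g j w \<noteq> {}}. \<gamma> * b (gdist g j w))
   + (\<Sum>(y,z)\<in>{(y,z). y < n \<and> z < n \<and> y < z \<and> conn g y z \<and> j \<in> ess_set n g y z}.
        \<gamma> / real (card (ess_set n g y z)) * 2 * b (gdist g y z))"

(* Entry of newcomer n into a network g on {..<n}, first link to T.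
   Entrant's value: its utility including the entry term -c0 * d_T (d_T before the link). *)
definition entrant_value :: "(nat \<Rightarrow> real) \<Rightarrow> real \<Rightarrow> real \<Rightarrow> real \<Rightarrow> nat \<Rightarrow> nat set set \<Rightarrow> nat \<Rightarrow> real" where
  "entrant_value b c \<gamma> c0 n g T =
     util b c \<gamma> (Suc n) (insert {n, T} g) n - c0 * real (deg g T)"

definition entry_accepted :: "(nat \<Rightarrow> real) \<Rightarrow> real \<Rightarrow> real \<Rightarrow> nat \<Rightarrow> nat set set \<Rightarrow> nat \<Rightarrow> bool" where
  "entry_accepted b c \<gamma> n g T \<longleftrightarrow>
     T < n \<and> util b c \<gamma> n g T \<le> util b c \<gamma> (Suc n) (insert {n, T} g) T"

(* the newcomer enters by linking to T: T is a best (acceptable) choice and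
   entering is strictly better than staying out (utility 0) *)
definition enters :: "(nat \<Rightarrow> real) \<Rightarrow> real \<Rightarrow> real \<Rightarrow> real \<Rightarrow> nat \<Rightarrow> nat set set \<Rightarrow> nat \<Rightarrow> bool" where
  "enters b c \<gamma> c0 n g T \<longleftrightarrow>
     entry_accepted b c \<gamma> n g T \<and> entrant_value b c \<gamma> c0 n g T > 0 \<and>
     (\<forall>T'. entry_accepted b c \<gamma> n g T' \<longrightarrow> entrant_value b c \<gamma> c0 n g T' \<le> entrant_value b c \<gamma> c0 n g T)"

definition options :: "(nat \<Rightarrow> real) \<Rightarrow> real \<Rightarrow> real \<Rightarrow> nat \<Rightarrow> nat set set \<Rightarrow> nat \<Rightarrow> nat set set set" where
  "options b c \<gamma> n g i =
     {insert {i, k} g | k. k < n \<and> k \<noteq> i \<and> {i, k} \<notin> g \<and>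
                          util b c \<gamma> n g k \<le> util b c \<gamma> n (insert {i, k} g) k}
   \<union> {g - {{i, k}} | k. k \<noteq> i \<and> {i, k} \<in> g}"

definition move :: "(nat \<Rightarrow> real) \<Rightarrow> real \<Rightarrow> real \<Rightarrow> nat \<Rightarrow> nat set set \<Rightarrow> nat set set \<Rightarrow> bool" where
  "move b c \<gamma> n g g' \<longleftrightarrow> (\<exists>i<n. g' \<in> options b c \<gamma> n g i \<and>
       util b c \<gamma> n g i < util b c \<gamma> n g' i \<and>
       (\<forall>h\<in>options b c \<gamma> n g i. util b c \<gamma> n h i \<le> util b c \<gamma> n g' i))"

definition pairwise_stable :: "(nat \<Rightarrow> real) \<Rightarrow> real \<Rightarrow> real \<Rightarrow> nat \<Rightarrow> nat set set \<Rightarrow> bool" where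
  "pairwise_stable b c \<gamma> n g \<longleftrightarrow>
     (\<forall>i j. i \<noteq> j \<and> {i, j} \<in> g \<longrightarrow>
        util b c \<gamma> n (g - {{i, j}}) i \<le> util b c \<gamma> n g i \<and>
        util b c \<gamma> n (g - {{i, j}}) j \<le> util b c \<gamma> n g j) \<and>
     (\<forall>i j. i < n \<and> j < n \<and> i \<noteq> j \<and> {i, j} \<notin> g \<longrightarrow>
        util b c \<gamma> n g i < util b c \<gamma> n (insert {i, j} g) i \<longrightarrow>
        util b c \<gamma> n (insert {i, j} g) j < util b c \<gamma> n g j)"

inductive formed :: "(nat \<Rightarrow> real) \<Rightarrow> real \<Rightarrow> real \<Rightarrow> real \<Rightarrow> nat \<Rightarrow> nat set set \<Rightarrow> bool"
  for b c \<gamma> c0 where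
  start: "formed b c \<gamma> c0 (Suc 0) {}"
| step: "formed b c \<gamma> c0 n g \<Longrightarrow> enters b c \<gamma> c0 n g T \<Longrightarrow>
         (move b c \<gamma> (Suc n))\<^sup>*\<^sup>* (insert {n, T} g) g' \<Longrightarrow>
         pairwise_stable b c \<gamma> (Suc n) g' \<Longrightarrow> formed b c \<gamma> c0 (Suc n) g'"

definition welfare :: "(nat \<Rightarrow> real) \<Rightarrow> real \<Rightarrow> nat \<Rightarrow> nat set set \<Rightarrow> real" where
  "welfare b c n g = (\<Sum>j<n. real (deg g j) * (b 1 - c)
      + (\<Sum>w\<in>{w. w < n \<and> conn g j w \<and> gdist g j w > 1}. b (gdist g j w)))"

definition efficient :: "(nat \<Rightarrow> real) \<Rightarrow> real \<Rightarrow> nat \<Rightarrow> nat set set \<Rightarrow> bool" where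
  "efficient b c n g \<longleftrightarrow> graph_on n g \<and>
     (\<forall>g'. graph_on n g' \<longrightarrow> welfare b c n g' \<le> welfare b c n g)"

end

theory Submission
  imports Defs "HOL-Library.Transitive_Closure_Table"
begin

(* Write a = b1 - c.  The utility of a node j splits as
     deg j * a + sum over other nodes w of V(j,w) + rents Rt collected as an essential node,
   where V(j,w) = b(l(j,w)) at distance >= 2, reduced to (1-gamma) b(l) when some node is
   essential for j,w.  Two estimates drive everything:
   - adding a link ij raises i's utility by at least a - V(i,j), and V(i,j) <= b2 for a
     non-neighbour (add_link, V_le_b2); cutting a bridge loses at least a (del_bridge);
   - a node's welfare contribution is at most (|component| - 1) b2 - deg j (b2 - a)
     (wnode_bound); together with a component count (a forest argument: degrees sum to at
     least 2(N - #components)) this bounds the welfare of any network.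
   Part 1: with c > b1 the first newcomer would get a < 0, so nobody enters.
   Part 2: explicit utilities in and around a star show that a newcomer links to the centre
     (c0 small), that no move leaves a star, and stars maximise welfare when 0 < a <= b2.
   Part 3: with a > b2 every missing link is profitable for both ends, so pairwise stable
     networks are complete, and complete networks maximise welfare when a >= b2. *)

section \<open>Paths, connectivity, distance and essential nodes\<close>

lemma is_path_Nil [simp]: "\<not> is_path g y z []"
  by (simp add: is_path_def)

lemma is_path_single [simp]: "is_path g y z [a] \<longleftrightarrow> a = y \<and> y = z"
  by (auto simp: is_path_def)

lemma path_edge: "is_path g y z xs \<Longrightarrow> Suc i < length xs \<Longrightarrow> {xs ! i, xs ! Suc i} \<in> g"
  unfolding is_path_def by blast

lemma is_path_Cons2: "is_path g y z (a # b # xs) \<longleftrightarrow>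
   a = y \<and> {y, b} \<in> g \<and> y \<notin> set (b # xs) \<and> is_path g b z (b # xs)"
proof
  assume H: "is_path g y z (a # b # xs)"
  have "{(b # xs) ! i, (b # xs) ! Suc i} \<in> g" if "Suc i < length (b # xs)" for i
    using path_edge[OF H, of "Suc i"] that by simp
  moreover have "{a, b} \<in> g" using path_edge[OF H, of 0] by simp
  ultimately show "a = y \<and> {y, b} \<in> g \<and> y \<notin> set (b # xs) \<and> is_path g b z (b # xs)"
    using H unfolding is_path_def by auto
next
  assume H: "a = y \<and> {y, b} \<in> g \<and> y \<notin> set (b # xs) \<and> is_path g b z (b # xs)"
  have "{(a # b # xs) ! i, (a # b # xs) ! Suc i} \<in> g" if i: "Suc i < length (a # b # xs)" for i
  proof (cases i)
    case 0
    then show ?thesis using H by simp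
  next
    case (Suc k)
    then show ?thesis using H i unfolding is_path_def by simp
  qed
  then show "is_path g y z (a # b # xs)" using H unfolding is_path_def by auto
qed

definition adj :: "nat set set \<Rightarrow> nat \<Rightarrow> nat \<Rightarrow> bool" where
  "adj g x y \<longleftrightarrow> {x, y} \<in> g"

lemma is_path_iff_rtrancl_path:
  "is_path g y z (y # ys) \<longleftrightarrow> rtrancl_path (adj g) y ys z \<and> distinct (y # ys)"
proof (induction ys arbitrary: y)
  case Nil
  then show ?case by (auto elim: rtrancl_path.cases intro: rtrancl_path.base)
next
  case (Cons a ys)
  show ?case
    by (auto simp: is_path_Cons2 Cons adj_def intro: rtrancl_path.step elim: rtrancl_path.cases)
qed

lemma is_path_hd: "is_path g y z xs \<Longrightarrow> \<exists>ys. xs = y # ys"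
  by (cases xs) (auto simp: is_path_def)

lemma conn_iff_rtranclp: "conn g y z \<longleftrightarrow> (adj g)\<^sup>*\<^sup>* y z"
proof
  assume "conn g y z"
  then obtain xs where p: "is_path g y z xs" unfolding conn_def by blast
  then obtain ys where "xs = y # ys" using is_path_hd by blast
  then show "(adj g)\<^sup>*\<^sup>* y z"
    using p is_path_iff_rtrancl_path rtranclp_eq_rtrancl_path by metis
next
  assume "(adj g)\<^sup>*\<^sup>* y z"
  then obtain ys where "rtrancl_path (adj g) y ys z" using rtranclp_eq_rtrancl_path by metis
  then obtain ys' where "rtrancl_path (adj g) y ys' z" "distinct (y # ys')"
    by (rule rtrancl_path_distinct)
  then have "is_path g y z (y # ys')" using is_path_iff_rtrancl_path by blast
  then show "conn g y z" unfolding conn_def by blast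
qed

lemma conn_refl [simp]: "conn g y y"
  unfolding conn_def by (rule exI[of _ "[y]"]) simp

lemma conn_sym: "conn g y z \<Longrightarrow> conn g z y"
  unfolding conn_iff_rtranclp
proof (induction rule: rtranclp_induct)
  case (step y z)
  have "adj g z y" using step(2) unfolding adj_def by (simp add: insert_commute)
  then show ?case using step(3) by (rule converse_rtranclp_into_rtranclp)
qed simp

lemma conn_trans: "conn g x y \<Longrightarrow> conn g y z \<Longrightarrow> conn g x z"
  unfolding conn_iff_rtranclp by simp

lemma conn_edge: "{x, y} \<in> g \<Longrightarrow> conn g x y"
  unfolding conn_iff_rtranclp adj_def by (rule r_into_rtranclp)

lemma path_hd: "is_path g y z xs \<Longrightarrow> xs ! 0 = y"
  unfolding is_path_def by (metis hd_conv_nth)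

lemma path_last: "is_path g y z xs \<Longrightarrow> xs ! (length xs - 1) = z"
  unfolding is_path_def by (metis last_conv_nth)

lemma path_len2: "is_path g y z xs \<Longrightarrow> y \<noteq> z \<Longrightarrow> 2 \<le> length xs"
  by (cases xs rule: remdups_adj.cases) (auto simp: is_path_def)

lemma path_first_edge: "is_path g y z xs \<Longrightarrow> y \<noteq> z \<Longrightarrow> {y, xs ! 1} \<in> g"
  using path_edge[of g y z xs 0] path_len2 path_hd by fastforce

lemma path_last_edge: "is_path g y z xs \<Longrightarrow> y \<noteq> z \<Longrightarrow> {xs ! (length xs - 2), z} \<in> g"
  using path_edge[of g y z xs "length xs - 2"] path_len2[of g y z xs] path_last[of g y z xs]
  by (simp add: Suc_diff_Suc numeral_2_eq_2)

lemma take_path: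
  "is_path g y z xs \<Longrightarrow> 0 < k \<Longrightarrow> k \<le> length xs \<Longrightarrow> is_path g y (xs ! (k - 1)) (take k xs)"
  unfolding is_path_def by (auto simp: hd_conv_nth last_conv_nth min_def)

lemma path_mono: "g \<subseteq> g' \<Longrightarrow> is_path g y z xs \<Longrightarrow> is_path g' y z xs"
  unfolding is_path_def by blast

lemma conn_mono: "g \<subseteq> g' \<Longrightarrow> conn g y z \<Longrightarrow> conn g' y z"
  unfolding conn_def using path_mono by blast

lemma not_conn_isolated: "y \<noteq> z \<Longrightarrow> (\<forall>u. {u, z} \<notin> g) \<Longrightarrow> \<not> conn g y z"
  unfolding conn_def using path_last_edge by blast

lemma path_length: "is_path g y z xs \<Longrightarrow> length xs = Suc (length xs - 1)"
  by (cases xs) auto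

lemma gdist_le: "is_path g y z xs \<Longrightarrow> gdist g y z \<le> length xs - 1"
proof -
  assume p: "is_path g y z xs"
  then have "\<exists>ys. is_path g y z ys \<and> length ys = Suc (length xs - 1)" using path_length by blast
  then show ?thesis unfolding gdist_def by (rule Least_le)
qed

lemma gdist_path: "conn g y z \<Longrightarrow> \<exists>xs. is_path g y z xs \<and> length xs = Suc (gdist g y z)"
proof -
  assume "conn g y z"
  then obtain xs where "is_path g y z xs" unfolding conn_def by blast
  then have "\<exists>k ys. is_path g y z ys \<and> length ys = Suc k" using path_length by blast
  then show ?thesis unfolding gdist_def by (rule LeastI_ex)
qed

lemma gdist_ge: "conn g y z \<Longrightarrow> (\<And>xs. is_path g y z xs \<Longrightarrow> m < length xs) \<Longrightarrow> m \<le> gdist g y z"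
  using gdist_path by fastforce

lemma gdist_refl [simp]: "gdist g y y = 0"
  using gdist_le[of g y y "[y]"] by simp

lemma gdist_pos: "conn g y z \<Longrightarrow> y \<noteq> z \<Longrightarrow> 1 \<le> gdist g y z"
  using gdist_ge[of g y z 1] path_len2 by fastforce

lemma gdist_edge: "{y, z} \<in> g \<Longrightarrow> y \<noteq> z \<Longrightarrow> gdist g y z = 1"
proof -
  assume e: "{y, z} \<in> g" and ne: "y \<noteq> z"
  have "is_path g y z [y, z]" using e ne by (simp add: is_path_Cons2)
  then have "gdist g y z \<le> 1" using gdist_le by fastforce
  then show ?thesis using gdist_pos[OF conn_edge[OF e] ne] by simp
qed

lemma gdist_one_edge: "conn g y z \<Longrightarrow> gdist g y z = 1 \<Longrightarrow> {y, z} \<in> g"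
proof -
  assume c: "conn g y z" and d: "gdist g y z = 1"
  obtain xs where p: "is_path g y z xs" and l: "length xs = 2" using gdist_path[OF c] d by auto
  then show ?thesis using path_edge[OF p, of 0] path_last[OF p] path_hd[OF p] by simp
qed

lemma gdist_ge2: "conn g y z \<Longrightarrow> y \<noteq> z \<Longrightarrow> {y, z} \<notin> g \<Longrightarrow> 2 \<le> gdist g y z"
  using gdist_pos[of g y z] gdist_one_edge[of g y z] by linarith

lemma gdist_mono: "g \<subseteq> g' \<Longrightarrow> conn g y z \<Longrightarrow> gdist g' y z \<le> gdist g y z"
proof -
  assume s: "g \<subseteq> g'" and "conn g y z"
  then obtain xs where p: "is_path g y z xs" and l: "length xs = Suc (gdist g y z)"
    using gdist_path by blast
  show ?thesis using gdist_le[OF path_mono[OF s p]] l by simp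
qed

lemma finite_ess_set [simp]: "finite (ess_set n g y z)"
  unfolding ess_set_def by simp

text \<open>An essential node is an interior node of a shortest path, so the endpoints are
  at distance at least two, and the node has two distinct neighbours.\<close>

lemma essential_interior:
  assumes e: "essential g x y z" and p: "is_path g y z xs"
  obtains i where "0 < i" "Suc i < length xs" "xs ! i = x"
proof -
  have "x \<in> set xs" "x \<noteq> y" "x \<noteq> z" using e p unfolding essential_def by auto
  then obtain i where i: "i < length xs" "xs ! i = x" by (metis in_set_conv_nth)
  moreover have "i \<noteq> 0" using i(2) path_hd[OF p] \<open>x \<noteq> y\<close> by (cases i) auto
  moreover have "i \<noteq> length xs - 1" using i(2) path_last[OF p] \<open>x \<noteq> z\<close> by auto
  ultimately show thesis using that by simp
qed

lemma ess_dist: "essential g x y z \<Longrightarrow> conn g y z \<Longrightarrow> 2 \<le> gdist g y z"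
proof -
  assume e: "essential g x y z" and "conn g y z"
  then obtain xs where p: "is_path g y z xs" and l: "length xs = Suc (gdist g y z)"
    using gdist_path by blast
  obtain i where "0 < i" "Suc i < length xs" using essential_interior[OF e p] .
  then show ?thesis using l by simp
qed

lemma ess_nbrs: "essential g x y z \<Longrightarrow> conn g y z \<Longrightarrow> \<exists>u v. u \<noteq> v \<and> {x, u} \<in> g \<and> {x, v} \<in> g"
proof -
  assume e: "essential g x y z" and "conn g y z"
  then obtain xs where p: "is_path g y z xs" unfolding conn_def by blast
  obtain i where i: "0 < i" "Suc i < length xs" "xs ! i = x" using essential_interior[OF e p] .
  have "{xs ! (i - 1), x} \<in> g" using path_edge[OF p, of "i - 1"] i by simp
  moreover have "{x, xs ! Suc i} \<in> g" using path_edge[OF p i(2)] i by simp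
  moreover have "xs ! (i - 1) \<noteq> xs ! Suc i"
    using p i unfolding is_path_def by (simp add: nth_eq_iff_index_eq)
  ultimately show ?thesis by (metis insert_commute)
qed

lemma ess_set_dist: "conn g j w \<Longrightarrow> ess_set n g j w \<noteq> {} \<Longrightarrow> 2 \<le> gdist g j w"
  unfolding ess_set_def using ess_dist by blast

lemma ess_set_mono: "g \<subseteq> g' \<Longrightarrow> ess_set n g' y z \<subseteq> ess_set n g y z"
  unfolding ess_set_def essential_def using path_mono by blast

lemma ess_insert: "essential g i y z \<Longrightarrow> essential (insert {i, j} g) i y z"
  unfolding essential_def
proof (intro conjI allI impI; (elim conjE)?)
  fix xs assume e: "\<forall>xs. is_path g y z xs \<longrightarrow> i \<in> set xs" and p: "is_path (insert {i, j} g) y z xs"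
  show "i \<in> set xs"
  proof (cases "\<forall>k. Suc k < length xs \<longrightarrow> {xs ! k, xs ! Suc k} \<in> g")
    case True
    then show ?thesis using e p unfolding is_path_def by blast
  next
    case False
    then obtain k where k: "Suc k < length xs" "{xs ! k, xs ! Suc k} = {i, j}"
      using path_edge[OF p] by blast
    then have "i = xs ! k \<or> i = xs ! Suc k" by (metis doubleton_eq_iff)
    then show ?thesis using k(1) by (metis Suc_lessD nth_mem)
  qed
qed

definition pendant :: "nat set set \<Rightarrow> nat \<Rightarrow> nat \<Rightarrow> bool" where
  "pendant g y u \<longleftrightarrow> (\<forall>v. {y, v} \<in> g \<longrightarrow> v = u)"

lemma pendant_path_second: "is_path g y z xs \<Longrightarrow> y \<noteq> z \<Longrightarrow> pendant g y u \<Longrightarrow> xs ! 1 = u"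
  unfolding pendant_def using path_first_edge by blast

lemma pendant_path_penult:
  "is_path g y z xs \<Longrightarrow> y \<noteq> z \<Longrightarrow> pendant g z u \<Longrightarrow> xs ! (length xs - 2) = u"
  unfolding pendant_def using path_last_edge by (metis insert_commute)

lemma pendant_essential:
  assumes "y \<noteq> z" "u \<noteq> y" "u \<noteq> z" and "pendant g y u \<or> pendant g z u"
  shows "essential g u y z"
  unfolding essential_def
proof (intro conjI allI impI)
  fix xs assume p: "is_path g y z xs"
  have l: "2 \<le> length xs" using path_len2[OF p \<open>y \<noteq> z\<close>] .
  from assms(4) show "u \<in> set xs"
  proof
    assume "pendant g y u"
    then show ?thesis using pendant_path_second[OF p \<open>y \<noteq> z\<close>] l nth_mem[of 1 xs] by simp
  next
    assume "pendant g z u"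
    then show ?thesis using pendant_path_penult[OF p \<open>y \<noteq> z\<close>] l nth_mem[of "length xs - 2" xs] by simp
  qed
qed (use assms in auto)

text \<open>A pendant node has only one neighbour, hence is essential for no pair.\<close>

lemma pendant_not_essential: "pendant g x u \<Longrightarrow> conn g y z \<Longrightarrow> \<not> essential g x y z"
  unfolding pendant_def using ess_nbrs by blast

lemma pendant_gdist_ge3:
  assumes c: "conn g y z" and yz: "y \<noteq> z" and zu: "z \<noteq> u" and uv: "u \<noteq> v"
    and py: "pendant g y u" and pz: "pendant g z v"
  shows "3 \<le> gdist g y z"
proof (rule gdist_ge[OF c])
  fix xs assume p: "is_path g y z xs"
  have a1: "xs ! 1 = u" using pendant_path_second[OF p yz py] .
  have a2: "xs ! (length xs - 2) = v" using pendant_path_penult[OF p yz pz] .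
  have "length xs \<noteq> 2" using a1 path_last[OF p] zu by auto
  moreover have "length xs \<noteq> 3" using a1 a2 uv by auto
  ultimately show "3 < length xs" using path_len2[OF p yz] by linarith
qed

section \<open>Networks on a node set\<close>

lemma graph_on_edge: "graph_on n g \<Longrightarrow> {x, y} \<in> g \<Longrightarrow> x < n \<and> y < n \<and> x \<noteq> y"
  unfolding graph_on_def by (metis doubleton_eq_iff)

lemma graph_on_insert: "graph_on n g \<Longrightarrow> i < n \<Longrightarrow> j < n \<Longrightarrow> i \<noteq> j \<Longrightarrow> graph_on n (insert {i, j} g)"
  unfolding graph_on_def by blast

lemma graph_on_diff: "graph_on n g \<Longrightarrow> graph_on n (g - h)"
  unfolding graph_on_def by blast

lemma graph_on_mono: "graph_on n g \<Longrightarrow> n \<le> m \<Longrightarrow> graph_on m g"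
  unfolding graph_on_def by (meson less_le_trans)

lemma graph_on_1: "graph_on (Suc 0) g \<Longrightarrow> g = {}"
  unfolding graph_on_def by auto

lemma new_node_isolated: "graph_on n g \<Longrightarrow> y \<noteq> n \<Longrightarrow> \<not> conn g y n"
  using not_conn_isolated graph_on_edge by blast

definition Nset :: "nat set set \<Rightarrow> nat \<Rightarrow> nat set" where
  "Nset g j = {k. k \<noteq> j \<and> {j, k} \<in> g}"

lemma deg_Nset: "deg g j = card (Nset g j)"
  unfolding deg_def Nset_def by simp

lemma finite_Nset: "graph_on n g \<Longrightarrow> finite (Nset g i)"
proof -
  assume "graph_on n g"
  then have "Nset g i \<subseteq> {..<n}" unfolding Nset_def using graph_on_edge by blast
  then show ?thesis using finite_subset by blast
qed

lemma deg_insert: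
  "graph_on n g \<Longrightarrow> i \<noteq> j \<Longrightarrow> {i, j} \<notin> g \<Longrightarrow> deg (insert {i, j} g) i = Suc (deg g i)"
proof -
  assume G: "graph_on n g" and ne: "i \<noteq> j" and nj: "{i, j} \<notin> g"
  have "Nset (insert {i, j} g) i = insert j (Nset g i)"
    using ne unfolding Nset_def by (auto simp: doubleton_eq_iff)
  moreover have "j \<notin> Nset g i" using nj unfolding Nset_def by simp
  ultimately show ?thesis unfolding deg_Nset using finite_Nset[OF G] by simp
qed

section \<open>Decomposition of the utility\<close>

text \<open>The utility of node j splits into link payoffs, a value V for each other node w
  (indirect benefit net of the rent paid to intermediaries) and a rent Rt collected
  from each pair of nodes for which j is essential.\<close>

definition V :: "(nat \<Rightarrow> real) \<Rightarrow> real \<Rightarrow> nat \<Rightarrow> nat set set \<Rightarrow> nat \<Rightarrow> nat \<Rightarrow> real" where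
  "V b \<gamma> n g j w = (if conn g j w then (if 1 < gdist g j w then b (gdist g j w) else 0)
      - (if ess_set n g j w \<noteq> {} then \<gamma> * b (gdist g j w) else 0) else 0)"

definition Rt :: "(nat \<Rightarrow> real) \<Rightarrow> real \<Rightarrow> nat \<Rightarrow> nat set set \<Rightarrow> nat \<Rightarrow> nat \<times> nat \<Rightarrow> real" where
  "Rt b \<gamma> n g j p = (case p of (y, z) \<Rightarrow> if y < z \<and> conn g y z \<and> j \<in> ess_set n g y z
      then \<gamma> / real (card (ess_set n g y z)) * 2 * b (gdist g y z) else 0)"

lemma util_eq: "util b c \<gamma> n g j = real (deg g j) * (b 1 - c) + (\<Sum>w<n. V b \<gamma> n g j w)
   + (\<Sum>p\<in>{..<n}\<times>{..<n}. Rt b \<gamma> n g j p)"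
proof -
  have indirect: "(\<Sum>w\<in>{w. w < n \<and> conn g j w \<and> gdist g j w > 1}. b (gdist g j w))
     = (\<Sum>w<n. if conn g j w \<and> gdist g j w > 1 then b (gdist g j w) else 0)"
  proof -
    have e: "{w. w < n \<and> conn g j w \<and> gdist g j w > 1} = {w \<in> {..<n}. conn g j w \<and> gdist g j w > 1}"
      by auto
    show ?thesis unfolding e by (rule sum.inter_filter) simp
  qed
  have paid: "(\<Sum>w\<in>{w. w < n \<and> conn g j w \<and> ess_set n g j w \<noteq> {}}. \<gamma> * b (gdist g j w))
     = (\<Sum>w<n. if conn g j w \<and> ess_set n g j w \<noteq> {} then \<gamma> * b (gdist g j w) else 0)"
  proof -
    have e: "{w. w < n \<and> conn g j w \<and> ess_set n g j w \<noteq> {}} = {w \<in> {..<n}. conn g j w \<and> ess_set n g j w \<noteq> {}}"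
      by auto
    show ?thesis unfolding e by (rule sum.inter_filter) simp
  qed
  have pairs: "{(y,z). y < n \<and> z < n \<and> y < z \<and> conn g y z \<and> j \<in> ess_set n g y z}
       = {p \<in> {..<n}\<times>{..<n}. case p of (y,z) \<Rightarrow> y < z \<and> conn g y z \<and> j \<in> ess_set n g y z}"
    by auto
  have rent: "(\<Sum>(y,z)\<in>{(y,z). y < n \<and> z < n \<and> y < z \<and> conn g y z \<and> j \<in> ess_set n g y z}.
        \<gamma> / real (card (ess_set n g y z)) * 2 * b (gdist g y z))
     = (\<Sum>p\<in>{..<n}\<times>{..<n}. Rt b \<gamma> n g j p)"
    unfolding pairs sum.inter_filter[OF finite_SigmaI[OF finite_lessThan finite_lessThan]]
    by (rule sum.cong) (auto simp: Rt_def split: prod.splits)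
  have "(\<Sum>w<n. V b \<gamma> n g j w) = (\<Sum>w<n. if conn g j w \<and> gdist g j w > 1 then b (gdist g j w) else 0)
       - (\<Sum>w<n. if conn g j w \<and> ess_set n g j w \<noteq> {} then \<gamma> * b (gdist g j w) else 0)"
    unfolding sum_subtractf[symmetric] by (rule sum.cong) (auto simp: V_def)
  then show ?thesis unfolding util_def indirect paid rent by simp
qed

lemma Rt_sum_zero: "(\<And>y z. y < n \<Longrightarrow> z < n \<Longrightarrow> conn g y z \<Longrightarrow> \<not> essential g i y z) \<Longrightarrow>
   (\<Sum>p\<in>{..<n}\<times>{..<n}. Rt b \<gamma> n g i p) = 0"
  by (rule sum.neutral) (auto simp: Rt_def ess_set_def)

lemma ess_set_Suc: "graph_on n g \<Longrightarrow> conn g y z \<Longrightarrow> ess_set (Suc n) g y z = ess_set n g y z"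
proof -
  assume G: "graph_on n g" and c: "conn g y z"
  have "\<not> essential g n y z"
    using ess_nbrs[OF _ c] graph_on_edge[OF G] by blast
  then show ?thesis unfolding ess_set_def using less_Suc_eq by auto
qed

lemma util_Suc: "graph_on n g \<Longrightarrow> j < n \<Longrightarrow> util b c \<gamma> (Suc n) g j = util b c \<gamma> n g j"
proof -
  assume G: "graph_on n g" and j: "j < n"
  have "V b \<gamma> (Suc n) g j w = V b \<gamma> n g j w" for w
    unfolding V_def using ess_set_Suc[OF G] by simp
  moreover have "V b \<gamma> (Suc n) g j n = 0" unfolding V_def using new_node_isolated[OF G] j by simp
  ultimately have V: "(\<Sum>w<Suc n. V b \<gamma> (Suc n) g j w) = (\<Sum>w<n. V b \<gamma> n g j w)" by simp
  have Rt: "Rt b \<gamma> (Suc n) g j p = Rt b \<gamma> n g j p" for p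
    unfolding Rt_def using ess_set_Suc[OF G] by (auto split: prod.splits)
  have "(\<Sum>p\<in>{..<n}\<times>{..<n}. Rt b \<gamma> n g j p) = (\<Sum>p\<in>{..<Suc n}\<times>{..<Suc n}. Rt b \<gamma> n g j p)"
  proof (rule sum.mono_neutral_left)
    show "\<forall>p\<in>{..<Suc n}\<times>{..<Suc n} - {..<n}\<times>{..<n}. Rt b \<gamma> n g j p = 0"
    proof
      fix p assume p: "p \<in> {..<Suc n}\<times>{..<Suc n} - {..<n}\<times>{..<n}"
      obtain y z where yz: "p = (y, z)" by (cases p)
      have "y = n \<or> z = n" using p yz by (auto simp: less_Suc_eq)
      then have "\<not> (y < z \<and> conn g y z)" using new_node_isolated[OF G] conn_sym by (metis less_irrefl)
      then show "Rt b \<gamma> n g j p = 0" unfolding Rt_def yz by auto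
    qed
  qed auto
  then show ?thesis unfolding util_eq V Rt by simp
qed

locale decreasing_benefits =
  fixes b :: "nat \<Rightarrow> real" and \<gamma> :: real
  assumes b_decr: "\<forall>i\<ge>1. b (Suc i) < b i"
    and b_pos: "\<forall>i\<ge>1. 0 < b i"
    and gamma_nonneg: "0 \<le> \<gamma>" and gamma_lt1: "\<gamma> < 1"
begin

lemma b_anti: assumes "1 \<le> m" "m \<le> m'" shows "b m' \<le> b m"
  using assms(2)
proof (induction m' rule: dec_induct)
  case (step k)
  then show ?case using b_decr assms(1) by (meson dual_order.trans less_imp_le order.trans le_SucI)
qed simp

lemma b_pos': "1 \<le> m \<Longrightarrow> 0 < b m"
  using b_pos by simp

lemma V_refl: "V b \<gamma> n g j j = 0"
  unfolding V_def ess_set_def by (auto dest: ess_dist)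

lemma V_nconn: "\<not> conn g j w \<Longrightarrow> V b \<gamma> n g j w = 0"
  unfolding V_def by simp

lemma V_val: "conn g j w \<Longrightarrow> 2 \<le> gdist g j w \<Longrightarrow>
   V b \<gamma> n g j w = (if ess_set n g j w \<noteq> {} then 1 - \<gamma> else 1) * b (gdist g j w)"
  unfolding V_def by (auto simp: algebra_simps)

lemma V_close: "(conn g j w \<Longrightarrow> gdist g j w < 2) \<Longrightarrow> V b \<gamma> n g j w = 0"
  unfolding V_def using ess_set_dist[of g j w n] by force

lemma V_adj: "{j, w} \<in> g \<Longrightarrow> j \<noteq> w \<Longrightarrow> V b \<gamma> n g j w = 0"
  using V_close gdist_edge by simp

lemma V_nonneg: "0 \<le> V b \<gamma> n g j w"
proof (cases "conn g j w \<and> 2 \<le> gdist g j w")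
  case True
  then show ?thesis using V_val[of g j w] b_pos'[of "gdist g j w"] gamma_lt1 by simp
next
  case False
  then have "V b \<gamma> n g j w = 0" by (intro V_close) auto
  then show ?thesis by simp
qed

lemma V_upper: "1 \<le> m \<Longrightarrow> (conn g j w \<Longrightarrow> m \<le> gdist g j w) \<Longrightarrow> V b \<gamma> n g j w \<le> b m"
proof (cases "conn g j w \<and> 2 \<le> gdist g j w")
  case True
  assume m: "1 \<le> m" "conn g j w \<Longrightarrow> m \<le> gdist g j w"
  have "V b \<gamma> n g j w \<le> b (gdist g j w)"
    using V_val[of g j w] True b_pos'[of "gdist g j w"] gamma_nonneg by (auto simp: algebra_simps)
  also have "\<dots> \<le> b m" using b_anti m True by blast
  finally show ?thesis .
next
  case False
  assume "1 \<le> m"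
  then show ?thesis using False V_close[of g j w] b_pos'[of m] by force
qed

lemma V_upper_ess: "1 \<le> m \<Longrightarrow> conn g j w \<Longrightarrow> m \<le> gdist g j w \<Longrightarrow> ess_set n g j w \<noteq> {} \<Longrightarrow>
   V b \<gamma> n g j w \<le> (1 - \<gamma>) * b m"
  using V_val[OF _ ess_set_dist] b_anti[of m "gdist g j w"] gamma_lt1 by (simp add: mult_left_mono)

text \<open>Adding links (while keeping the distance at least two) can only raise V:
  distances shrink and essential nodes disappear.\<close>

lemma V_mono: "g \<subseteq> g' \<Longrightarrow> (conn g j w \<Longrightarrow> 2 \<le> gdist g j w \<Longrightarrow> 2 \<le> gdist g' j w) \<Longrightarrow>
   V b \<gamma> n g j w \<le> V b \<gamma> n g' j w"
proof (cases "conn g j w \<and> 2 \<le> gdist g j w")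
  case True
  assume s: "g \<subseteq> g'" and h: "conn g j w \<Longrightarrow> 2 \<le> gdist g j w \<Longrightarrow> 2 \<le> gdist g' j w"
  have c: "conn g j w" and d: "2 \<le> gdist g j w" using True by auto
  have c': "conn g' j w" using conn_mono[OF s c] .
  have d': "2 \<le> gdist g' j w" using h c d by blast
  have bb: "b (gdist g j w) \<le> b (gdist g' j w)" using b_anti d' gdist_mono[OF s c] by simp
  have f: "(if ess_set n g j w \<noteq> {} then 1 - \<gamma> else 1) \<le> (if ess_set n g' j w \<noteq> {} then 1 - \<gamma> else (1::real))"
    using ess_set_mono[OF s, of n j w] gamma_nonneg by auto
  have "(if ess_set n g j w \<noteq> {} then 1 - \<gamma> else 1) * b (gdist g j w)
       \<le> (if ess_set n g' j w \<noteq> {} then 1 - \<gamma> else 1) * b (gdist g' j w)"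
    using f bb b_pos'[of "gdist g j w"] d gamma_lt1 by (intro mult_mono) auto
  then show ?thesis using V_val[OF c d] V_val[OF c' d'] by simp
next
  case False
  then have "V b \<gamma> n g j w = 0" by (intro V_close) auto
  then show ?thesis using V_nonneg by simp
qed

lemma Rt_nonneg: "0 \<le> Rt b \<gamma> n g j p"
proof -
  obtain y z where p: "p = (y, z)" by (cases p)
  show ?thesis
  proof (cases "y < z \<and> conn g y z \<and> j \<in> ess_set n g y z")
    case True
    then have "0 < b (gdist g y z)" using gdist_pos b_pos' by auto
    then show ?thesis using True p gamma_nonneg unfolding Rt_def by simp
  qed (use p in \<open>auto simp: Rt_def\<close>)
qed

text \<open>A node's rents can only grow when it adds a link: it stays essential where it was,
  distances shrink and the rent is shared among fewer essential nodes.\<close>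

lemma Rt_mono_insert: "Rt b \<gamma> n g i p \<le> Rt b \<gamma> n (insert {i, j} g) i p"
proof -
  obtain y z where p: "p = (y, z)" by (cases p)
  let ?g' = "insert {i, j} g"
  show ?thesis
  proof (cases "y < z \<and> conn g y z \<and> i \<in> ess_set n g y z")
    case False
    then show ?thesis using p Rt_nonneg[of n ?g' i p] unfolding Rt_def by auto
  next
    case True
    have s: "g \<subseteq> ?g'" by auto
    have yz: "y < z" and c: "conn g y z" and ie: "i < n" "essential g i y z"
      using True unfolding ess_set_def by auto
    have c': "conn ?g' y z" using conn_mono[OF s c] .
    have ie': "i \<in> ess_set n ?g' y z" using ie ess_insert unfolding ess_set_def by blast
    have cd: "card (ess_set n ?g' y z) \<le> card (ess_set n g y z)"
      using card_mono[OF _ ess_set_mono[OF s]] by simp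
    have cp: "0 < card (ess_set n ?g' y z)" using ie' by (auto simp: card_gt_0_iff)
    have d1: "1 \<le> gdist ?g' y z" using gdist_pos[OF c'] yz by simp
    have bb: "b (gdist g y z) \<le> b (gdist ?g' y z)" using b_anti[OF d1 gdist_mono[OF s c]] .
    have bp: "0 \<le> b (gdist g y z)" using b_pos'[of "gdist g y z"] d1 gdist_mono[OF s c] by simp
    have q: "\<gamma> / real (card (ess_set n g y z)) \<le> \<gamma> / real (card (ess_set n ?g' y z))"
      using cd cp gamma_nonneg by (intro divide_left_mono) auto
    have "\<gamma> / real (card (ess_set n g y z)) * 2 * b (gdist g y z)
        \<le> \<gamma> / real (card (ess_set n ?g' y z)) * 2 * b (gdist ?g' y z)"
      using q bb bp gamma_nonneg by (intro mult_mono) auto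
    then show ?thesis using True p yz c' ie' unfolding Rt_def by simp
  qed
qed

lemma add_link:
  assumes G: "graph_on n g" and i: "i < n" and j: "j < n" and ne: "i \<noteq> j" and nj: "{i, j} \<notin> g"
  shows "util b c \<gamma> n g i + (b 1 - c) - V b \<gamma> n g i j \<le> util b c \<gamma> n (insert {i, j} g) i"
proof -
  let ?g' = "insert {i, j} g"
  have s: "g \<subseteq> ?g'" by auto
  have jn: "j \<in> {..<n}" using j by simp
  have others: "(\<Sum>w\<in>{..<n} - {j}. V b \<gamma> n g i w) \<le> (\<Sum>w\<in>{..<n} - {j}. V b \<gamma> n ?g' i w)"
  proof (rule sum_mono)
    fix w assume w: "w \<in> {..<n} - {j}"
    show "V b \<gamma> n g i w \<le> V b \<gamma> n ?g' i w"
    proof (rule V_mono[OF s])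
      assume c: "conn g i w" and d: "2 \<le> gdist g i w"
      have iw: "i \<noteq> w" using d by auto
      have "{i, w} \<notin> g" using gdist_edge[of i w g] d iw by auto
      then have "{i, w} \<notin> ?g'" using w iw by (auto simp: doubleton_eq_iff)
      then show "2 \<le> gdist ?g' i w" using gdist_ge2[OF conn_mono[OF s c] iw] by simp
    qed
  qed
  have rents: "(\<Sum>p\<in>{..<n}\<times>{..<n}. Rt b \<gamma> n g i p) \<le> (\<Sum>p\<in>{..<n}\<times>{..<n}. Rt b \<gamma> n ?g' i p)"
    by (rule sum_mono) (rule Rt_mono_insert)
  have "V b \<gamma> n ?g' i j = 0" using V_adj[of i j ?g'] ne by simp
  then show ?thesis
    using sum.remove[OF finite_lessThan jn, of "V b \<gamma> n g i"] sum.remove[OF finite_lessThan jn, of "V b \<gamma> n ?g' i"]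
      others rents deg_insert[OF G ne nj]
    unfolding util_eq by (simp add: algebra_simps)
qed

lemma V_le_b2: "i \<noteq> j \<Longrightarrow> {i, j} \<notin> g \<Longrightarrow> V b \<gamma> n g i j \<le> b 2"
  by (rule V_upper) (auto intro: gdist_ge2)

lemma del_bridge:
  assumes G: "graph_on N g" and e: "{i, k} \<in> g" and ne: "i \<noteq> k"
    and nc: "\<not> conn (g - {{i, k}}) i k" and cb: "c < b 1"
  shows "util b c \<gamma> N (g - {{i, k}}) i < util b c \<gamma> N g i"
proof -
  let ?h = "g - {{i, k}}"
  have ik: "i < N" "k < N" using graph_on_edge[OF G e] by auto
  have "util b c \<gamma> N ?h i + (b 1 - c) - V b \<gamma> N ?h i k \<le> util b c \<gamma> N (insert {i, k} ?h) i"
    by (rule add_link[OF graph_on_diff[OF G] ik ne]) simp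
  moreover have "insert {i, k} ?h = g" using e by auto
  ultimately have "util b c \<gamma> N ?h i + (b 1 - c) - V b \<gamma> N ?h i k \<le> util b c \<gamma> N g i" by simp
  then show ?thesis using V_nconn[OF nc] cb by simp
qed

end

section \<open>Welfare bounds and efficiency of complete networks\<close>

definition Cset :: "nat \<Rightarrow> nat set set \<Rightarrow> nat \<Rightarrow> nat set" where
  "Cset n g j = {w. w < n \<and> conn g j w}"

definition Wset :: "nat \<Rightarrow> nat set set \<Rightarrow> nat \<Rightarrow> nat set" where
  "Wset n g j = {w. w < n \<and> conn g j w \<and> gdist g j w > 1}"

definition wnode :: "(nat \<Rightarrow> real) \<Rightarrow> real \<Rightarrow> nat \<Rightarrow> nat set set \<Rightarrow> nat \<Rightarrow> real" where
  "wnode b c n g j = real (card (Nset g j)) * (b 1 - c) + (\<Sum>w\<in>Wset n g j. b (gdist g j w))"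

lemma welfare_eq: "welfare b c n g = (\<Sum>j<n. wnode b c n g j)"
  unfolding welfare_def wnode_def Wset_def Nset_def deg_def by simp

lemma single_node_efficient: "efficient b c 1 {}"
  unfolding efficient_def using graph_on_1 by (auto simp: graph_on_def)

lemma finite_Cset [simp]: "finite (Cset n g j)"
  unfolding Cset_def by simp

lemma Cset_le: "card (Cset n g j) \<le> n"
proof -
  have "Cset n g j \<subseteq> {..<n}" unfolding Cset_def by auto
  then show ?thesis using card_mono[of "{..<n}"] by fastforce
qed

lemma Nset_Wset_card:
  assumes G: "graph_on n g" and j: "j < n"
  shows "card (Nset g j) + card (Wset n g j) \<le> card (Cset n g j) - 1"
proof -
  have "w \<in> Cset n g j - {j}" if "w \<in> Nset g j" for w
    using that graph_on_edge[OF G] conn_edge unfolding Nset_def Cset_def by blast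
  moreover have "w \<in> Cset n g j - {j}" if "w \<in> Wset n g j" for w
    using that unfolding Wset_def Cset_def by auto
  ultimately have sub: "Nset g j \<union> Wset n g j \<subseteq> Cset n g j - {j}" by blast
  have "gdist g j w = 1" if "w \<in> Nset g j" for w
    using that gdist_edge unfolding Nset_def by blast
  then have disj: "Nset g j \<inter> Wset n g j = {}" unfolding Wset_def by fastforce
  have "finite (Nset g j \<union> Wset n g j)" by (rule finite_subset[OF sub]) simp
  then have fin: "finite (Nset g j)" "finite (Wset n g j)" by auto
  have "card (Nset g j) + card (Wset n g j) = card (Nset g j \<union> Wset n g j)"
    using card_Un_disjoint[OF fin disj] by simp
  also have "\<dots> \<le> card (Cset n g j - {j})" using card_mono[OF _ sub] by simp
  also have "\<dots> = card (Cset n g j) - 1" using j unfolding Cset_def by simp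
  finally show ?thesis .
qed

context decreasing_benefits
begin

text \<open>Basic welfare estimate: every node of j's component that is not a neighbour is worth
  at most b2, so each link at j replaces a b2 by the link payoff b1-c.\<close>

lemma wnode_bound:
  assumes G: "graph_on n g" and j: "j < n"
  shows "wnode b c n g j \<le> real (card (Cset n g j) - 1) * b 2 - real (card (Nset g j)) * (b 2 - (b 1 - c))"
proof -
  have k: "card (Wset n g j) \<le> card (Cset n g j) - 1 - card (Nset g j)"
    using Nset_Wset_card[OF G j] by simp
  have "(\<Sum>w\<in>Wset n g j. b (gdist g j w)) \<le> (\<Sum>w\<in>Wset n g j. b 2)"
    by (rule sum_mono) (auto simp: Wset_def intro: b_anti)
  also have "\<dots> \<le> real (card (Cset n g j) - 1 - card (Nset g j)) * b 2"
    using k b_pos'[of 2] by (simp add: mult_right_mono)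
  also have "\<dots> = (real (card (Cset n g j) - 1) - real (card (Nset g j))) * b 2"
  proof -
    have "real (card (Cset n g j) - 1 - card (Nset g j)) = real (card (Cset n g j) - 1) - real (card (Nset g j))"
      by (rule of_nat_diff) (use Nset_Wset_card[OF G j] in simp)
    then show ?thesis by (simp only:)
  qed
  finally show ?thesis unfolding wnode_def by (simp add: algebra_simps)
qed

lemma complete_efficient:
  assumes cc: "b 2 \<le> b 1 - c" and G: "graph_on n g"
    and comp: "\<forall>i<n. \<forall>j<n. i \<noteq> j \<longrightarrow> {i, j} \<in> g"
  shows "efficient b c n g"
  unfolding efficient_def
proof (intro conjI allI impI)
  show "graph_on n g" using G .
next
  fix g' assume G': "graph_on n g'"
  have a0: "0 \<le> b 1 - c" using cc b_pos'[of 2] by simp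
  have complete: "wnode b c n g j = real (n - 1) * (b 1 - c)" if j: "j < n" for j
  proof -
    have "Nset g j = {..<n} - {j}"
    proof
      show "Nset g j \<subseteq> {..<n} - {j}" unfolding Nset_def using graph_on_edge[OF G] by blast
      show "{..<n} - {j} \<subseteq> Nset g j" unfolding Nset_def using comp j by blast
    qed
    moreover have "Wset n g j = {}"
    proof -
      have "gdist g j w = 1" if "w < n" "w \<noteq> j" for w
        using that comp j gdist_edge by blast
      then show ?thesis unfolding Wset_def by force
    qed
    ultimately show ?thesis using j unfolding wnode_def by simp
  qed
  have other: "wnode b c n g' j \<le> real (n - 1) * (b 1 - c)" if j: "j < n" for j
  proof -
    let ?K = "real (card (Cset n g' j) - 1)" and ?d = "real (card (Nset g' j))"
    have dK: "?d \<le> ?K" using Nset_Wset_card[OF G' j] by simp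
    have "wnode b c n g' j \<le> ?K * b 2 - ?d * (b 2 - (b 1 - c))" using wnode_bound[OF G' j] .
    also have "\<dots> = ?K * (b 1 - c) - (?K - ?d) * ((b 1 - c) - b 2)" by (simp add: algebra_simps)
    also have "\<dots> \<le> ?K * (b 1 - c)" using dK cc by simp
    also have "\<dots> \<le> real (n - 1) * (b 1 - c)"
      using Cset_le[of n g' j] a0 by (intro mult_right_mono) auto
    finally show ?thesis .
  qed
  have "(\<Sum>j<n. wnode b c n g' j) \<le> (\<Sum>j<n. wnode b c n g j)"
    by (rule sum_mono) (use complete other in simp)
  then show "welfare b c n g' \<le> welfare b c n g" unfolding welfare_eq .
qed

end

section \<open>Counting components\<close>

text \<open>Each component is represented by its least node (its root).  Every other node has a
  neighbour strictly closer to the root, which yields at least two degree units per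
  non-root node; and each component contains exactly one root.\<close>

definition comp_root :: "nat \<Rightarrow> nat set set \<Rightarrow> nat \<Rightarrow> nat" where
  "comp_root N g v = Min (Cset N g v)"

definition roots :: "nat \<Rightarrow> nat set set \<Rightarrow> nat set" where
  "roots N g = {v. v < N \<and> comp_root N g v = v}"

lemma Cset_self: "v < N \<Longrightarrow> v \<in> Cset N g v"
  unfolding Cset_def by simp

lemma Cset_conn: "conn g u v \<Longrightarrow> Cset N g u = Cset N g v"
proof -
  assume uv: "conn g u v"
  have "conn g u w \<longleftrightarrow> conn g v w" for w
    using conn_trans[OF uv, of w] conn_trans[OF conn_sym[OF uv], of w] by blast
  then show ?thesis unfolding Cset_def by simp
qed

lemma comp_root_in: "v < N \<Longrightarrow> comp_root N g v \<in> Cset N g v"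
proof -
  assume "v < N"
  then have "Cset N g v \<noteq> {}" using Cset_self by blast
  then show ?thesis unfolding comp_root_def by (rule Min_in[OF finite_Cset])
qed

lemma comp_root_conn: "v < N \<Longrightarrow> conn g (comp_root N g v) v"
  by (rule conn_sym) (use comp_root_in[of v N g] in \<open>simp add: Cset_def\<close>)

lemma comp_root_le: "w \<in> Cset N g v \<Longrightarrow> comp_root N g v \<le> w"
  unfolding comp_root_def by simp

lemma roots_sub: "roots N g \<subseteq> {..<N}"
  unfolding roots_def by auto

lemma finite_roots: "finite (roots N g)"
  using finite_subset[OF roots_sub] by simp

lemma card_non_roots: "card ({..<N} - roots N g) = N - card (roots N g)"
  using card_Diff_subset[OF finite_roots roots_sub] by simp

lemma roots_pos: "1 \<le> N \<Longrightarrow> 1 \<le> card (roots N g)"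
proof -
  assume "1 \<le> N"
  then have "comp_root N g 0 = 0" using comp_root_le[OF Cset_self, of 0 N g] by simp
  then have "0 \<in> roots N g" using \<open>1 \<le> N\<close> unfolding roots_def by simp
  then have "roots N g \<noteq> {}" by blast
  then show ?thesis using finite_roots by (simp add: Suc_le_eq card_gt_0_iff)
qed

lemma parent_exists:
  assumes G: "graph_on N g" and v: "v < N" "comp_root N g v \<noteq> v"
  shows "\<exists>u. u < N \<and> u \<noteq> v \<and> {u, v} \<in> g \<and>
    gdist g (comp_root N g u) u < gdist g (comp_root N g v) v"
proof -
  let ?m = "comp_root N g v"
  obtain xs where p: "is_path g ?m v xs" and l: "length xs = Suc (gdist g ?m v)"
    using gdist_path[OF comp_root_conn[OF v(1)]] by blast
  have l2: "2 \<le> length xs" using path_len2[OF p v(2)] .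
  let ?u = "xs ! (length xs - 2)"
  have e: "{?u, v} \<in> g" using path_last_edge[OF p v(2)] .
  have uv: "?u < N" "?u \<noteq> v" using graph_on_edge[OF G e] by auto
  have mu: "comp_root N g ?u = ?m" unfolding comp_root_def using Cset_conn[OF conn_edge[OF e]] by simp
  have "is_path g ?m ?u (take (length xs - 1) xs)"
    using take_path[OF p, of "length xs - 1"] l2 by (simp add: numeral_2_eq_2)
  then have "gdist g ?m ?u \<le> length xs - 2" using gdist_le l2 by fastforce
  then show ?thesis using uv e mu l l2 by (intro exI[of _ ?u]) simp
qed

text \<open>Orienting the link to a chosen parent both ways gives 2(N - #roots) distinct
  (node, neighbour) pairs.\<close>

lemma degree_sum_ge:
  assumes G: "graph_on N g"
  shows "2 * (N - card (roots N g)) \<le> (\<Sum>j<N. card (Nset g j))"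
proof -
  define H where "H v = gdist g (comp_root N g v) v" for v
  define NR where "NR = {..<N} - roots N g"
  define P where "P v = (SOME u. u < N \<and> u \<noteq> v \<and> {u, v} \<in> g \<and> H u < H v)" for v
  have P: "P v < N \<and> P v \<noteq> v \<and> {P v, v} \<in> g \<and> H (P v) < H v" if v: "v \<in> NR" for v
  proof -
    have "\<exists>u. u < N \<and> u \<noteq> v \<and> {u, v} \<in> g \<and> H u < H v"
      using parent_exists[OF G, of v] v unfolding NR_def roots_def H_def by auto
    then show ?thesis unfolding P_def by (rule someI_ex)
  qed
  define A1 where "A1 = (\<lambda>v. (v, P v)) ` NR"
  define A2 where "A2 = (\<lambda>v. (P v, v)) ` NR"
  have c1: "card A1 = card NR" unfolding A1_def by (rule card_image) (auto intro: inj_onI)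
  have c2: "card A2 = card NR" unfolding A2_def by (rule card_image) (auto intro: inj_onI)
  have disj: "A1 \<inter> A2 = {}"
  proof -
    have False if v: "v \<in> NR" and u: "u \<in> NR" and eq: "(v, P v) = (P u, u)" for u v
    proof -
      have "v = P u" "u = P v" using eq by auto
      then show False using P[OF u] P[OF v] by auto
    qed
    then show ?thesis unfolding A1_def A2_def by blast
  qed
  define E where "E = (SIGMA j:{..<N}. Nset g j)"
  have finE: "finite E" unfolding E_def using finite_Nset[OF G] by auto
  have cE: "card E = (\<Sum>j<N. card (Nset g j))"
    unfolding E_def using finite_Nset[OF G] by (subst card_SigmaI) auto
  have sub: "A1 \<union> A2 \<subseteq> E"
  proof
    fix x assume "x \<in> A1 \<union> A2"
    then obtain v where v: "v \<in> NR" and x: "x = (v, P v) \<or> x = (P v, v)" unfolding A1_def A2_def by blast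
    have "v < N" using v unfolding NR_def by simp
    moreover have "{P v, v} \<in> g" "{v, P v} \<in> g" "P v \<noteq> v" "P v < N" using P[OF v] by (auto simp: insert_commute)
    ultimately show "x \<in> E" using x unfolding E_def Nset_def by auto
  qed
  have fA: "finite A1" "finite A2" unfolding A1_def A2_def NR_def by auto
  have "2 * card NR = card (A1 \<union> A2)" using card_Un_disjoint[OF fA disj] c1 c2 by simp
  also have "\<dots> \<le> card E" using card_mono[OF finE sub] .
  finally show ?thesis using cE card_non_roots unfolding NR_def by simp
qed

text \<open>A component contains only one root, so it has at most N - #roots + 1 nodes.\<close>

lemma Cset_card_roots: "j < N \<Longrightarrow> card (Cset N g j) \<le> N - card (roots N g) + 1"
proof -
  assume j: "j < N"
  have "Cset N g j \<inter> roots N g \<subseteq> {comp_root N g j}"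
  proof
    fix u assume u: "u \<in> Cset N g j \<inter> roots N g"
    then have "Cset N g u = Cset N g j" using Cset_conn[of g j u] unfolding Cset_def by auto
    then show "u \<in> {comp_root N g j}" using u unfolding roots_def comp_root_def by auto
  qed
  then have one: "card (Cset N g j \<inter> roots N g) \<le> 1"
    using card_mono[of "{comp_root N g j}"] by simp
  have "card (Cset N g j - roots N g) \<le> card ({..<N} - roots N g)"
    by (rule card_mono) (auto simp: Cset_def)
  also have "\<dots> = N - card (roots N g)" using card_non_roots .
  finally show ?thesis
    using one card_Int_Diff[OF finite_Cset, of N g j "roots N g"] by linarith
qed

section \<open>Star networks\<close>

definition star :: "nat \<Rightarrow> nat \<Rightarrow> nat set set" where
  "star N ctr = {{ctr, k} | k. k < N \<and> k \<noteq> ctr}"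

lemma star_edge: "ctr < N \<Longrightarrow> {x, y} \<in> star N ctr \<longleftrightarrow> x \<noteq> y \<and> x < N \<and> y < N \<and> (x = ctr \<or> y = ctr)"
  unfolding star_def by (auto simp: doubleton_eq_iff)

lemma star_graph: "ctr < N \<Longrightarrow> graph_on N (star N ctr)"
  unfolding star_def graph_on_def by blast

lemma star_Suc: "ctr < n \<Longrightarrow> insert {n, ctr} (star n ctr) = star (Suc n) ctr"
  unfolding star_def by (auto simp: insert_commute less_Suc_eq)

lemma star_1: "star (Suc 0) 0 = {}"
  unfolding star_def by auto

text \<open>With two nodes either node is the centre, so a third node always creates a star.\<close>

lemma star_2_recentre: "ctr < 2 \<Longrightarrow> T < 2 \<Longrightarrow> T \<noteq> ctr \<Longrightarrow> insert {2, T} (star 2 ctr) = star 3 T"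
proof -
  assume a: "ctr < 2" "T < 2" "T \<noteq> ctr"
  have "star 2 ctr = {{ctr, T}}"
    using a unfolding star_def by (auto simp: less_2_cases_iff)
  moreover have "star 3 T = {{T, ctr}, {T, 2}}"
    using a unfolding star_def by (auto simp: eval_nat_numeral less_Suc_eq)
  ultimately show ?thesis by (auto simp: insert_commute)
qed

lemma star_leaf_pendant: "ctr < N \<Longrightarrow> x \<noteq> ctr \<Longrightarrow> pendant (star N ctr) x ctr"
  unfolding pendant_def using star_edge by blast

lemma star_Nset_leaf: "ctr < N \<Longrightarrow> i < N \<Longrightarrow> i \<noteq> ctr \<Longrightarrow> Nset (star N ctr) i = {ctr}"
  unfolding Nset_def using star_edge by auto

lemma star_Nset_ctr: "ctr < N \<Longrightarrow> Nset (star N ctr) ctr = {..<N} - {ctr}"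
  unfolding Nset_def using star_edge by auto

lemma star_leaf_pair:
  assumes c: "ctr < N" and i: "i < N" "i \<noteq> ctr" and w: "w < N" "w \<noteq> ctr" and iw: "i \<noteq> w"
  shows "conn (star N ctr) i w \<and> gdist (star N ctr) i w = 2 \<and> ctr \<in> ess_set N (star N ctr) i w"
proof -
  let ?S = "star N ctr"
  have p: "is_path ?S i w [i, ctr, w]" using c i w iw by (auto simp: is_path_Cons2 star_edge)
  have cn: "conn ?S i w" using p unfolding conn_def by blast
  have "gdist ?S i w \<le> 2" using gdist_le[OF p] by simp
  moreover have "2 \<le> gdist ?S i w" using gdist_ge2[OF cn iw] star_edge[OF c] i w by blast
  moreover have "essential ?S ctr i w"
    using pendant_essential[OF iw] i w star_leaf_pendant[OF c i(2)] by auto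
  ultimately show ?thesis using cn c unfolding ess_set_def by simp
qed

lemma star_only_centre_essential:
  assumes c: "ctr < N" and s: "star N ctr \<subseteq> g" and y: "y < N" and z: "z < N" and i: "i \<noteq> ctr"
  shows "\<not> essential g i y z"
proof
  assume e: "essential g i y z"
  have "\<exists>xs. is_path (star N ctr) y z xs \<and> set xs \<subseteq> {y, z, ctr}"
  proof (cases "y = z \<or> y = ctr \<or> z = ctr")
    case True
    show ?thesis
    proof (cases "y = z")
      case False
      then have "is_path (star N ctr) y z [y, z]" using True c y z by (auto simp: is_path_Cons2 star_edge)
      then show ?thesis by (intro exI[of _ "[y, z]"]) simp
    qed (intro exI[of _ "[y]"], simp)
  next
    case False
    then have "is_path (star N ctr) y z [y, ctr, z]" using c y z by (auto simp: is_path_Cons2 star_edge)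
    then show ?thesis by (intro exI[of _ "[y, ctr, z]"]) simp
  qed
  then obtain xs where p: "is_path (star N ctr) y z xs" and st: "set xs \<subseteq> {y, z, ctr}" by blast
  have "i \<in> set xs" using e path_mono[OF s p] unfolding essential_def by blast
  then show False using st e i unfolding essential_def by auto
qed

lemma sum_outside:
  assumes "A \<subseteq> {..<N}"
  shows "(\<Sum>w<N. if w \<notin> A then k else 0) = real (N - card A) * (k :: real)"
proof -
  have "{w \<in> {..<N}. w \<notin> A} = {..<N} - A" by auto
  moreover have "card ({..<N} - A) = N - card A"
    using card_Diff_subset[OF finite_subset[OF assms] assms] by simp
  ultimately show ?thesis by (simp add: sum.inter_filter[symmetric])
qed

context decreasing_benefits
begin

lemma star_wnode_ctr: "ctr < N \<Longrightarrow> wnode b c N (star N ctr) ctr = real (N - 1) * (b 1 - c)"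
proof -
  assume c: "ctr < N"
  have "w \<notin> Wset N (star N ctr) ctr" for w
  proof
    assume "w \<in> Wset N (star N ctr) ctr"
    then have w: "w < N" "1 < gdist (star N ctr) ctr w" unfolding Wset_def by auto
    then have "w \<noteq> ctr" by (metis gdist_refl not_less_zero)
    have "gdist (star N ctr) ctr w = 1" by (rule gdist_edge) (use w \<open>w \<noteq> ctr\<close> c star_edge[OF c] in simp_all)
    then show False using w by simp
  qed
  then have "Wset N (star N ctr) ctr = {}" by blast
  then show ?thesis unfolding wnode_def star_Nset_ctr[OF c] using c by simp
qed

lemma star_wnode_leaf:
  assumes c: "ctr < N" and j: "j < N" "j \<noteq> ctr"
  shows "wnode b c N (star N ctr) j = (b 1 - c) + real (N - 2) * b 2"
proof -
  let ?S = "star N ctr"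
  have W: "Wset N ?S j = {..<N} - {j, ctr}"
  proof
    have jc: "gdist ?S j ctr = 1" by (rule gdist_edge) (use j c star_edge[OF c] in simp_all)
    show "Wset N ?S j \<subseteq> {..<N} - {j, ctr}"
    proof
      fix w assume "w \<in> Wset N ?S j"
      then have w: "w < N" "1 < gdist ?S j w" unfolding Wset_def by auto
      then have "w \<noteq> j" by (metis gdist_refl not_less_zero)
      moreover have "w \<noteq> ctr" using w jc by auto
      ultimately show "w \<in> {..<N} - {j, ctr}" using w by simp
    qed
    show "{..<N} - {j, ctr} \<subseteq> Wset N ?S j"
      using star_leaf_pair[OF c j] unfolding Wset_def by auto
  qed
  have "(\<Sum>w\<in>{..<N} - {j, ctr}. b (gdist ?S j w)) = (\<Sum>w\<in>{..<N} - {j, ctr}. b 2)"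
    by (rule sum.cong[OF refl]) (use star_leaf_pair[OF c j] in auto)
  moreover have "card ({..<N} - {j, ctr}) = N - 2" using c j by (subst card_Diff_subset) auto
  ultimately show ?thesis unfolding wnode_def W star_Nset_leaf[OF c j] by simp
qed

lemma star_welfare:
  assumes c: "ctr < N"
  shows "welfare b c N (star N ctr) = real (N - 1) * (b 1 - c) + real (N - 1) * ((b 1 - c) + real (N - 2) * b 2)"
proof -
  have "welfare b c N (star N ctr) = wnode b c N (star N ctr) ctr
      + (\<Sum>j\<in>{..<N} - {ctr}. wnode b c N (star N ctr) j)"
    unfolding welfare_eq by (rule sum.remove) (use c in simp_all)
  also have "(\<Sum>j\<in>{..<N} - {ctr}. wnode b c N (star N ctr) j) = (\<Sum>j\<in>{..<N} - {ctr}. (b 1 - c) + real (N - 2) * b 2)"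
    by (rule sum.cong[OF refl]) (use star_wnode_leaf[OF c] in simp)
  also have "\<dots> = real (N - 1) * ((b 1 - c) + real (N - 2) * b 2)"
    using c by (simp only: sum_constant card_Diff_singleton_if) simp
  finally show ?thesis unfolding star_wnode_ctr[OF c] .
qed

text \<open>Combining the node estimate with the component counting: a network whose components
  have N - r + 1 nodes at most, and whose degrees sum to at least 2(N - r), has welfare at
  most (N - r)(N b2 - 2(b2 - (b1 - c))).\<close>

lemma welfare_le_components:
  assumes G: "graph_on N g" and a2: "b 1 - c \<le> b 2"
  shows "welfare b c N g \<le> real (N - card (roots N g)) * (real N * b 2 - 2 * (b 2 - (b 1 - c)))"
proof -
  let ?r = "card (roots N g)" and ?d = "b 2 - (b 1 - c)"
  have "wnode b c N g j \<le> real (N - ?r) * b 2 - real (card (Nset g j)) * ?d" if j: "j < N" for j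
  proof -
    have "card (Cset N g j) - 1 \<le> N - ?r" using Cset_card_roots[OF j, of g] by linarith
    then have "real (card (Cset N g j) - 1) * b 2 \<le> real (N - ?r) * b 2"
      using b_pos'[of 2] by (intro mult_right_mono) auto
    then show ?thesis using wnode_bound[OF G j, where c = c] by linarith
  qed
  then have "welfare b c N g \<le> (\<Sum>j<N. real (N - ?r) * b 2 - real (card (Nset g j)) * ?d)"
    unfolding welfare_eq by (intro sum_mono) simp
  also have "\<dots> = real N * real (N - ?r) * b 2 - real (\<Sum>j<N. card (Nset g j)) * ?d"
    by (simp add: sum_subtractf sum_distrib_right)
  also have "\<dots> \<le> real N * real (N - ?r) * b 2 - real (2 * (N - ?r)) * ?d"
  proof -
    have "real (2 * (N - ?r)) \<le> real (\<Sum>j<N. card (Nset g j))"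
      using degree_sum_ge[OF G] by (simp only: of_nat_le_iff)
    then have "real (2 * (N - ?r)) * ?d \<le> real (\<Sum>j<N. card (Nset g j)) * ?d"
      by (rule mult_right_mono) (use a2 in simp)
    then show ?thesis by simp
  qed
  also have "\<dots> = real (N - ?r) * (real N * b 2 - 2 * ?d)"
    unfolding of_nat_mult by (simp add: algebra_simps)
  finally show ?thesis .
qed

lemma star_efficient:
  assumes a0: "0 < b 1 - c" and a2: "b 1 - c \<le> b 2" and c: "ctr < N"
  shows "efficient b c N (star N ctr)"
  unfolding efficient_def
proof (intro conjI allI impI)
  show "graph_on N (star N ctr)" using star_graph[OF c] .
next
  fix g' assume G: "graph_on N g'"
  let ?r = "card (roots N g')" and ?F = "real N * b 2 - 2 * (b 2 - (b 1 - c))"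
  have "welfare b c N g' \<le> real (N - ?r) * ?F" using welfare_le_components[OF G a2] .
  also have "\<dots> \<le> real (N - 1) * ?F"
  proof (cases "N = 1")
    case False
    then have "2 * b 2 \<le> real N * b 2" using c b_pos'[of 2] by (intro mult_right_mono) auto
    then have "0 \<le> ?F" using a0 by argo
    moreover have "real (N - ?r) \<le> real (N - 1)" using roots_pos[of N g'] c by simp
    ultimately show ?thesis by (rule mult_right_mono[rotated])
  qed (use roots_pos[of N g'] in simp)
  also have "\<dots> = welfare b c N (star N ctr)"
  proof (cases "N = 1")
    case False
    then have "real (N - 1) = real N - 1" "real (N - 2) = real N - 2" using c by (simp_all add: of_nat_diff)
    then show ?thesis unfolding star_welfare[OF c] by (simp add: algebra_simps)
  qed (use star_welfare[OF c] in simp)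
  finally show "welfare b c N g' \<le> welfare b c N (star N ctr)" .
qed

section \<open>Utilities in and around a star\<close>

lemma util_star_leaf:
  assumes c: "ctr < N" and i: "i < N" "i \<noteq> ctr"
  shows "util b c' \<gamma> N (star N ctr) i = (b 1 - c') + real (N - 2) * ((1 - \<gamma>) * b 2)"
proof -
  let ?S = "star N ctr"
  have "V b \<gamma> N ?S i w = (if w \<notin> {i, ctr} then (1 - \<gamma>) * b 2 else 0)" if w: "w < N" for w
  proof (cases "w \<in> {i, ctr}")
    case True
    then show ?thesis using V_refl V_adj[of i ctr ?S] c i star_edge by auto
  next
    case False
    then have "conn ?S i w" "gdist ?S i w = 2" "ctr \<in> ess_set N ?S i w"
      using star_leaf_pair[OF c i w] by auto
    then show ?thesis using V_val[of ?S i w] False by auto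
  qed
  then have "(\<Sum>w<N. V b \<gamma> N ?S i w) = (\<Sum>w<N. if w \<notin> {i, ctr} then (1 - \<gamma>) * b 2 else 0)"
    by (intro sum.cong) simp_all
  then have "(\<Sum>w<N. V b \<gamma> N ?S i w) = real (N - 2) * ((1 - \<gamma>) * b 2)"
    using sum_outside[of "{i, ctr}" N] c i by simp
  moreover have "(\<Sum>p\<in>{..<N}\<times>{..<N}. Rt b \<gamma> N ?S i p) = 0"
    by (rule Rt_sum_zero) (use star_only_centre_essential[OF c _ _ _ i(2)] in blast)
  moreover have "deg ?S i = 1" unfolding deg_Nset star_Nset_leaf[OF c i] by simp
  ultimately show ?thesis unfolding util_eq by simp
qed

text \<open>A leaf i that links to another leaf k gains one link payoff but loses the
  indirect value of k; the centre stays essential for all other leaves.\<close>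

lemma util_star_leaf_link:
  assumes c: "ctr < N" and i: "i < N" "i \<noteq> ctr" and k: "k < N" "k \<noteq> ctr" and ik: "i \<noteq> k"
  shows "util b c' \<gamma> N (insert {i, k} (star N ctr)) i \<le> 2 * (b 1 - c') + real (N - 3) * ((1 - \<gamma>) * b 2)"
proof -
  let ?S = "star N ctr"
  let ?S' = "insert {i, k} ?S"
  have s: "?S \<subseteq> ?S'" by auto
  have Vw: "V b \<gamma> N ?S' i w \<le> (if w \<notin> {i, ctr, k} then (1 - \<gamma>) * b 2 else 0)" if w: "w < N" for w
  proof (cases "w \<in> {i, ctr, k}")
    case True
    then show ?thesis using V_refl V_adj[of i w ?S'] c i ik star_edge by auto
  next
    case False
    have cw: "conn ?S' i w" using conn_mono[OF s] star_leaf_pair[OF c i w] False by auto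
    have "{i, w} \<notin> ?S'" using False star_edge[OF c] i by (auto simp: doubleton_eq_iff)
    then have d: "2 \<le> gdist ?S' i w" using gdist_ge2[OF cw] False by auto
    have "pendant ?S' w ctr" using False star_edge[OF c] unfolding pendant_def by (auto simp: doubleton_eq_iff)
    then have "essential ?S' ctr i w" using False i by (intro pendant_essential) auto
    then have "ess_set N ?S' i w \<noteq> {}" using c unfolding ess_set_def by blast
    then show ?thesis using V_upper_ess[of 2, OF _ cw d] False by simp
  qed
  have "(\<Sum>w<N. V b \<gamma> N ?S' i w) \<le> (\<Sum>w<N. if w \<notin> {i, ctr, k} then (1 - \<gamma>) * b 2 else 0)"
    by (rule sum_mono) (use Vw in simp)
  also have "\<dots> = real (N - 3) * ((1 - \<gamma>) * b 2)"
    using sum_outside[of "{i, ctr, k}" N] c i k ik by simp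
  finally have "(\<Sum>w<N. V b \<gamma> N ?S' i w) \<le> real (N - 3) * ((1 - \<gamma>) * b 2)" .
  moreover have "(\<Sum>p\<in>{..<N}\<times>{..<N}. Rt b \<gamma> N ?S' i p) = 0"
    by (rule Rt_sum_zero) (use star_only_centre_essential[OF c s _ _ i(2)] in blast)
  moreover have "deg ?S' i = 2"
    using deg_insert[OF star_graph[OF c] ik] star_edge[OF c] i k star_Nset_leaf[OF c i]
    by (simp add: deg_Nset)
  ultimately show ?thesis unfolding util_eq by simp
qed

lemma newcomer_pendant: "ctr < n \<Longrightarrow> pendant (insert {n, l} (star n ctr)) n l"
  using star_edge[of ctr n n] by (auto simp: pendant_def doubleton_eq_iff)

text \<open>Such a newcomer reaches the centre at distance two and the other leaves at distance
  three, always through the essential node l; so it values the centre at most (1-gamma) b2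
  and each other leaf at most (1-gamma) b3.\<close>

lemma V_newcomer_at_leaf:
  assumes c: "ctr < n" and l: "l < n" "l \<noteq> ctr" and w: "w < Suc n"
  shows "V b \<gamma> (Suc n) (insert {n, l} (star n ctr)) n w
    \<le> (if w = ctr then (1 - \<gamma>) * b 2 else 0) + (if w \<notin> {l, ctr, n} then (1 - \<gamma>) * b 3 else 0)"
proof (cases "w \<in> {n, l}")
  case True
  then have "V b \<gamma> (Suc n) (insert {n, l} (star n ctr)) n w = 0"
    using V_refl V_adj[of n l "insert {n, l} (star n ctr)"] l by auto
  then show ?thesis using True l c by auto
next
  case False
  let ?P = "insert {n, l} (star n ctr)"
  have pn: "pendant ?P n l" using newcomer_pendant[OF c] .
  have e_lc: "{l, ctr} \<in> ?P" using l c by (simp add: star_edge[OF c])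
  have "essential ?P l n w" using False l pn by (intro pendant_essential) auto
  then have "l \<in> ess_set (Suc n) ?P n w" using l unfolding ess_set_def by simp
  then have es: "ess_set (Suc n) ?P n w \<noteq> {}" by blast
  show ?thesis
  proof (cases "w = ctr")
    case True
    have "is_path ?P n w [n, l, w]" using True l c e_lc by (auto simp: is_path_Cons2)
    then have cw: "conn ?P n w" unfolding conn_def by blast
    have "{n, ctr} \<notin> ?P" using star_edge[OF c] l c by (auto simp: doubleton_eq_iff)
    then have "2 \<le> gdist ?P n w" using gdist_ge2[OF cw] True c by auto
    then show ?thesis using V_upper_ess[of 2, OF _ cw _ es] True l by simp
  next
    case wc: False
    have wn: "w < n" using w False by simp
    have "{ctr, w} \<in> ?P" using star_edge[OF c] wn wc c by blast
    then have "is_path ?P n w [n, l, ctr, w]" using wc False l c e_lc by (auto simp: is_path_Cons2)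
    then have cw: "conn ?P n w" unfolding conn_def by blast
    have "pendant ?P w ctr"
      using star_edge[OF c] False wc unfolding pendant_def by (auto simp: doubleton_eq_iff)
    then have "3 \<le> gdist ?P n w" using pendant_gdist_ge3[OF cw _ _ _ pn] False l by auto
    then show ?thesis using V_upper_ess[of 3, OF _ cw _ es] wc False by simp
  qed
qed

lemma util_pendant_at_leaf:
  assumes c: "ctr < n" and l: "l < n" "l \<noteq> ctr"
  shows "util b c' \<gamma> (Suc n) (insert {n, l} (star n ctr)) n
    \<le> (b 1 - c') + (1 - \<gamma>) * b 2 + real (n - 2) * ((1 - \<gamma>) * b 3)"
proof -
  let ?P = "insert {n, l} (star n ctr)"
  have pn: "pendant ?P n l" using newcomer_pendant[OF c] .
  have "(\<Sum>w<Suc n. V b \<gamma> (Suc n) ?P n w) \<le> (\<Sum>w<Suc n. (if w = ctr then (1 - \<gamma>) * b 2 else 0)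
      + (if w \<notin> {l, ctr, n} then (1 - \<gamma>) * b 3 else 0))"
    by (rule sum_mono) (use V_newcomer_at_leaf[OF c l] in simp)
  also have "\<dots> = (1 - \<gamma>) * b 2 + real (Suc n - 3) * ((1 - \<gamma>) * b 3)"
    unfolding sum.distrib using sum_outside[of "{l, ctr, n}" "Suc n"] c l by simp
  finally have "(\<Sum>w<Suc n. V b \<gamma> (Suc n) ?P n w) \<le> (1 - \<gamma>) * b 2 + real (n - 2) * ((1 - \<gamma>) * b 3)"
    by simp
  moreover have "(\<Sum>p\<in>{..<Suc n}\<times>{..<Suc n}. Rt b \<gamma> (Suc n) ?P n p) = 0"
    by (rule Rt_sum_zero) (use pendant_not_essential[OF pn] in blast)
  moreover have "Nset ?P n = {l}" using pn l unfolding Nset_def pendant_def by auto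
  ultimately show ?thesis unfolding util_eq deg_Nset by simp
qed

end

section \<open>The formation process\<close>

lemma move_graph: "move b c \<gamma> N g g' \<Longrightarrow> graph_on N g \<Longrightarrow> graph_on N g'"
  unfolding move_def options_def using graph_on_insert graph_on_diff by fastforce

lemma moves_graph: "(move b c \<gamma> N)\<^sup>*\<^sup>* g g' \<Longrightarrow> graph_on N g \<Longrightarrow> graph_on N g'"
  by (induction rule: rtranclp_induct) (auto intro: move_graph)

lemma formed_graph: "formed b c \<gamma> c0 n g \<Longrightarrow> graph_on n g \<and> (n = 1 \<or> pairwise_stable b c \<gamma> n g)"
proof (induction rule: formed.induct)
  case start
  then show ?case unfolding graph_on_def by simp
next
  case (step n g T g')
  have T: "T < n" using step(2) unfolding enters_def entry_accepted_def by blast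
  have "graph_on (Suc n) g" using graph_on_mono[of n g "Suc n"] step(5) by simp
  then have "graph_on (Suc n) (insert {n, T} g)" using T by (intro graph_on_insert) auto
  then show ?case using moves_graph[OF step(3)] step(4) by blast
qed

text \<open>Every link of a star is a bridge: removing it isolates a leaf.\<close>

lemma star_link_bridge:
  assumes c: "ctr < N" and e: "{i, k} \<in> star N ctr"
  shows "\<not> conn (star N ctr - {{i, k}}) i k"
proof -
  have leaf: "\<forall>u. {u, x} \<notin> star N ctr - {{i, k}}" if x: "x \<in> {i, k}" "x \<noteq> ctr" for x
    using star_edge[OF c] e x by (auto simp: doubleton_eq_iff)
  have ik: "i \<noteq> k" using star_edge[OF c] e by blast
  show ?thesis
  proof (cases "k = ctr")
    case True
    then have "i \<noteq> ctr" using ik by simp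
    then have "\<not> conn (star N ctr - {{i, k}}) k i" using not_conn_isolated[OF ik[symmetric]] leaf by blast
    then show ?thesis using conn_sym by blast
  next
    case False
    then show ?thesis using not_conn_isolated[OF ik] leaf by blast
  qed
qed

context decreasing_benefits
begin

text \<open>If a link is profitable but not worth more than (1-gamma) b2, a star admits no
  improving move: new links between leaves cost more than the rent they save, and every
  existing link is a bridge.\<close>

lemma star_no_move:
  assumes c: "ctr < N" and cb: "c < b 1" and cl: "b 1 - c \<le> (1 - \<gamma>) * b 2"
  shows "\<not> move b c \<gamma> N (star N ctr) h"
proof
  let ?S = "star N ctr"
  assume "move b c \<gamma> N ?S h"
  then obtain i where i: "i < N" "h \<in> options b c \<gamma> N ?S i" "util b c \<gamma> N ?S i < util b c \<gamma> N h i"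
    unfolding move_def by blast
  from i(2) consider (create) k where "h = insert {i, k} ?S" "k < N" "k \<noteq> i" "{i, k} \<notin> ?S"
    | (delete) k where "h = ?S - {{i, k}}" "k \<noteq> i" "{i, k} \<in> ?S"
    unfolding options_def by blast
  then show False
  proof cases
    case (create k)
    then have ic: "i \<noteq> ctr" and kc: "k \<noteq> ctr" using star_edge[OF c] i by auto
    then have N3: "3 \<le> N" using create c i by presburger
    have "util b c \<gamma> N h i \<le> 2 * (b 1 - c) + real (N - 3) * ((1 - \<gamma>) * b 2)"
      using util_star_leaf_link[OF c i(1) ic create(2) kc create(3)[symmetric]] create(1) by simp
    moreover have "util b c \<gamma> N ?S i = (b 1 - c) + real (N - 2) * ((1 - \<gamma>) * b 2)"
      using util_star_leaf[OF c i(1) ic] .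
    moreover have "real (N - 2) = real (N - 3) + 1" using N3 by (simp add: of_nat_diff)
    ultimately show False using i(3) cl by (simp add: algebra_simps)
  next
    case (delete k)
    then have "util b c \<gamma> N h i < util b c \<gamma> N ?S i"
      using del_bridge[OF star_graph[OF c] _ _ star_link_bridge[OF c] cb] by auto
    then show False using i(3) by simp
  qed
qed

text \<open>The centre always accepts a newcomer, since the new link is a bridge worth b1-c > 0.\<close>

lemma centre_accepts:
  assumes c: "ctr < n" and cb: "c < b 1"
  shows "entry_accepted b c \<gamma> n (star n ctr) ctr"
proof -
  let ?S = "star n ctr"
  have GS: "graph_on n ?S" using star_graph[OF c] .
  have cn: "ctr \<noteq> n" using c by simp
  have nin: "{ctr, n} \<notin> ?S" using graph_on_edge[OF GS] by blast
  have "util b c \<gamma> (Suc n) ?S ctr + (b 1 - c) - V b \<gamma> (Suc n) ?S ctr n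
      \<le> util b c \<gamma> (Suc n) (insert {ctr, n} ?S) ctr"
    using add_link[OF graph_on_mono[OF GS] _ _ cn nin] c by simp
  moreover have "V b \<gamma> (Suc n) ?S ctr n = 0" using V_nconn new_node_isolated[OF GS cn] by blast
  moreover have "util b c \<gamma> (Suc n) ?S ctr = util b c \<gamma> n ?S ctr" using util_Suc[OF GS c] .
  ultimately show ?thesis using c cb unfolding entry_accepted_def by (simp add: insert_commute)
qed

lemma entrant_value_centre:
  assumes c: "ctr < n"
  shows "entrant_value b c \<gamma> c0 n (star n ctr) ctr
    = (b 1 - c) + real (n - 1) * ((1 - \<gamma>) * b 2) - c0 * real (n - 1)"
proof -
  have "util b c \<gamma> (Suc n) (insert {n, ctr} (star n ctr)) n = (b 1 - c) + real (n - 1) * ((1 - \<gamma>) * b 2)"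
    unfolding star_Suc[OF c] using util_star_leaf[of ctr "Suc n" n] c by simp
  moreover have "deg (star n ctr) ctr = n - 1" unfolding deg_Nset star_Nset_ctr[OF c] using c by simp
  ultimately show ?thesis unfolding entrant_value_def by simp
qed

lemma entrant_value_leaf:
  assumes c: "ctr < n" and T: "T < n" "T \<noteq> ctr"
  shows "entrant_value b c \<gamma> c0 n (star n ctr) T
    \<le> (b 1 - c) + (1 - \<gamma>) * b 2 + real (n - 2) * ((1 - \<gamma>) * b 3) - c0"
proof -
  have "deg (star n ctr) T = 1" unfolding deg_Nset star_Nset_leaf[OF c T] by simp
  then show ?thesis unfolding entrant_value_def using util_pendant_at_leaf[OF c T, of c] by simp
qed

text \<open>With three or more nodes, a low entry fee makes the centre strictly the best target:
  the gap between the two entry values is (n-2)((1-gamma)(b2-b3) - c0).\<close>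

lemma centre_beats_leaf:
  assumes c: "ctr < n" and T: "T < n" "T \<noteq> ctr" and n3: "3 \<le> n"
    and c0: "c0 < (1 - \<gamma>) * (b 2 - b 3)"
  shows "entrant_value b c \<gamma> c0 n (star n ctr) T < entrant_value b c \<gamma> c0 n (star n ctr) ctr"
proof -
  have e: "real (n - 1) = real n - 1" "real (n - 2) = real n - 2"
    using n3 by (simp_all add: of_nat_diff)
  have "entrant_value b c \<gamma> c0 n (star n ctr) ctr
      - ((b 1 - c) + (1 - \<gamma>) * b 2 + real (n - 2) * ((1 - \<gamma>) * b 3) - c0)
      = (real n - 2) * ((1 - \<gamma>) * (b 2 - b 3) - c0)"
    unfolding entrant_value_centre[OF c] e by (simp add: algebra_simps)
  moreover have "0 < (real n - 2) * ((1 - \<gamma>) * (b 2 - b 3) - c0)" using n3 c0 by simp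
  ultimately show ?thesis using entrant_value_leaf[OF c T, of c c0] by linarith
qed

lemma star_entry:
  assumes c: "ctr < n" and cb: "c < b 1" and c0: "c0 < (1 - \<gamma>) * (b 2 - b 3)"
    and en: "enters b c \<gamma> c0 n (star n ctr) T"
  shows "\<exists>ctr'<Suc n. insert {n, T} (star n ctr) = star (Suc n) ctr'"
proof -
  have T: "T < n" using en unfolding enters_def entry_accepted_def by simp
  consider "T = ctr" | "T \<noteq> ctr" "n = 2" | "T \<noteq> ctr" "3 \<le> n" using c T by linarith
  then show ?thesis
  proof cases
    case 1
    then show ?thesis using star_Suc[OF c] c by (intro exI[of _ ctr]) auto
  next
    case 2
    then show ?thesis using star_2_recentre[of ctr T] c T by (intro exI[of _ T]) (auto simp: numeral_3_eq_3)
  next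
    case 3
    have "entrant_value b c \<gamma> c0 n (star n ctr) ctr \<le> entrant_value b c \<gamma> c0 n (star n ctr) T"
      using en centre_accepts[OF c cb] unfolding enters_def by blast
    then show ?thesis using centre_beats_leaf[OF c T 3(1) 3(2) c0, where c = c] by simp
  qed
qed

lemma formed_star:
  assumes cl: "b 1 - b 2 + \<gamma> * b 2 \<le> c" and cb: "c < b 1" and c0: "c0 < (1 - \<gamma>) * (b 2 - b 3)"
  shows "formed b c \<gamma> c0 n g \<Longrightarrow> \<exists>ctr<n. g = star n ctr"
proof (induction rule: formed.induct)
  case start
  then show ?case using star_1 by auto
next
  case (step n g T g')
  obtain ctr where c: "ctr < n" and g: "g = star n ctr" using step(5) by blast
  obtain ctr' where c': "ctr' < Suc n" and e: "insert {n, T} g = star (Suc n) ctr'"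
    using star_entry[OF c cb c0] step(2) g by blast
  have stuck: "\<not> move b c \<gamma> (Suc n) (star (Suc n) ctr') h" for h
    using star_no_move[OF c' cb] cl by (simp add: algebra_simps)
  have "g' = star (Suc n) ctr'"
    using step(3) unfolding e
  proof (cases rule: converse_rtranclpE)
    case (step z)
    then show ?thesis using stuck by blast
  qed simp
  then show ?case using c' by blast
qed

lemma no_entry:
  assumes cb: "b 1 < c"
  shows "formed b c \<gamma> c0 n g \<Longrightarrow> n = 1 \<and> g = {}"
proof (induction rule: formed.induct)
  case (step n g T g')
  then have n: "n = 1" and g: "g = {}" and T: "T = 0"
    unfolding enters_def entry_accepted_def by auto
  have "util b c \<gamma> 2 (star 2 0) 1 = b 1 - c" using util_star_leaf[of 0 2 1] by simp
  moreover have "insert {1, 0} {} = star 2 0" using star_Suc[of 0 1] star_1 by (simp add: numeral_2_eq_2)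
  ultimately have "entrant_value b c \<gamma> c0 n g T = b 1 - c"
    unfolding entrant_value_def deg_def using n g T by (simp add: numeral_2_eq_2)
  then show ?case using step(2) cb unfolding enters_def by simp
qed simp

text \<open>Part 3: if a link is worth more than b2 to both ends, pairwise stability forces every link.\<close>

lemma pairwise_stable_complete:
  assumes cc: "c < b 1 - b 2" and G: "graph_on n g" and ps: "pairwise_stable b c \<gamma> n g"
    and i: "i < n" and j: "j < n" and ne: "i \<noteq> j"
  shows "{i, j} \<in> g"
proof (rule ccontr)
  assume nj: "{i, j} \<notin> g"
  have gain: "util b c \<gamma> n g x < util b c \<gamma> n (insert {i, j} g) x" if "x \<in> {i, j}" for x
  proof -
    define y where "y = (if x = i then j else i)"
    have xy: "x < n" "y < n" "x \<noteq> y" "{x, y} = {i, j}"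
      using that i j ne unfolding y_def by (auto simp: insert_commute)
    have "util b c \<gamma> n g x + (b 1 - c) - V b \<gamma> n g x y \<le> util b c \<gamma> n (insert {x, y} g) x"
      using add_link[OF G xy(1-3)] nj xy(4) by simp
    moreover have "V b \<gamma> n g x y \<le> b 2" using V_le_b2[OF xy(3)] nj xy(4) by simp
    ultimately show ?thesis using cc xy(4) by simp
  qed
  have "util b c \<gamma> n g i < util b c \<gamma> n (insert {i, j} g) i \<longrightarrow>
      util b c \<gamma> n (insert {i, j} g) j < util b c \<gamma> n g j"
    using ps i j ne nj unfolding pairwise_stable_def by blast
  then show False using gain[of i] gain[of j] by simp
qed

text \<open>Hence every formed network is complete; the bound on the entry fee in part 3 is not
  needed for this.\<close>

lemma formed_complete:
  assumes cc: "c < b 1 - b 2" and f: "formed b c \<gamma> c0 n g"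
  shows "\<forall>i<n. \<forall>j<n. i \<noteq> j \<longrightarrow> {i, j} \<in> g"
proof (intro allI impI)
  fix i j assume ij: "i < n" "j < n" "i \<noteq> j"
  then have "n \<noteq> 1" by auto
  then show "{i, j} \<in> g" using formed_graph[OF f] pairwise_stable_complete[OF cc] ij by blast
qed

end

theorem theorem6:
  fixes b :: "nat \<Rightarrow> real" and c \<gamma> c0 :: real
  assumes b_decr: "\<forall>i\<ge>1. b (Suc i) < b i"
    and b_pos: "\<forall>i\<ge>1. 0 < b i"
    and gamma: "0 \<le> \<gamma>" "\<gamma> < 1"
  shows "(c > b 1 \<longrightarrow>
            (\<forall>n g. formed b c \<gamma> c0 n g \<longrightarrow> n = 1 \<and> g = {}) \<and> efficient b c 1 {})
       \<and> (b 1 - b 2 + \<gamma> * b 2 \<le> c \<and> c < b 1 \<and> c0 < (1 - \<gamma>) * (b 2 - b 3) \<longrightarrow>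
            (\<forall>n g. formed b c \<gamma> c0 n g \<longrightarrow> efficient b c n g))
       \<and> (c < b 1 - b 2 \<and> c0 \<le> (1 - \<gamma>) * b 2 \<longrightarrow>
            (\<forall>n g. formed b c \<gamma> c0 n g \<longrightarrow> efficient b c n g))"
proof -
  interpret decreasing_benefits b \<gamma> using b_decr b_pos gamma by unfold_locales auto
  have "0 \<le> \<gamma> * b 2" using gamma b_pos'[of 2] by simp
  then have stars: "efficient b c n g"
    if "b 1 - b 2 + \<gamma> * b 2 \<le> c" "c < b 1" "c0 < (1 - \<gamma>) * (b 2 - b 3)" "formed b c \<gamma> c0 n g" for n g
    using formed_star[OF that] star_efficient[of c] that by fastforce
  have complete: "efficient b c n g" if "c < b 1 - b 2" "formed b c \<gamma> c0 n g" for n g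
    using complete_efficient formed_graph[OF that(2)] formed_complete[OF that] that(1) by simp
  show ?thesis using no_entry single_node_efficient stars complete by blast
qed

end
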